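(* In the setting described in the context, assume $G$ satisfies Condition 1. Then for each non-faulty agent $i$, the limit of $|y(t)-x_i(t)|$ as $t\to\infty$ exists and $\lim_{t\to\infty}|y(t)-x_i(t)|=0$.
   Context: A synchronous system of $n$ agents communicates over a directed graph $G=(\mathcal{V},\mathcal{E})$, $\mathcal{V}=\{1,\dots,n\}$, without self-loops; $N_i^-=\{j:(j,i)\in\mathcal{E}\}$. At most $f$ agents are Byzantine faulty (may send arbitrary, possibly inconsistent values); $\mathcal{F}$ is the set of faulty agents, $\phi=|\mathcal{F}|\le f$, non-faulty agents indexed $1,\dots,n-\phi$. Assignment matrix $\mathbf{A}\in\mathbb{R}^{k\times n}$: nonnegative entries, columns summing to $1$; agent $i$ holds $g_i=\sum_{j=1}^k\mathbf{A}_{ji}h_j$ for admissible (convex, $L$-Lipschitz, nonempty compact argmin) $h_1,\dots,h_k:\mathbb{R}\to\mathbb{R}$. Sparsity parameter $sp(\mathbf{A})$: smallest $s$ such that the sum of any $s$ columns of $\mathbf{A}$ is component-wise positive ($n+1$ if the sum of all columns is not). Reduced graph w.r.t. $\mathcal{F}$: subgraph of $G$ obtained by removing the nodes of $\mathcal{F}$ with their edges and then up to $f$ additional incoming edges at each remaining node; $R_{\mathcal{F}}$ the set of reduced graphs, $\tau=|R_{\mathcal{F}}|$. Source component: set of nodes each having a directed path to every other node of the graph. Condition 1: for every $\mathcal{F}'\subseteq\mathcal{V}$ with $|\mathcal{F}'|\le f$, every reduced graph w.r.t. $\mathcal{F}'$ has a source component with at least $\max\{f+1,sp(\mathbf{A})\}$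 nodes. Step sizes: $\alpha(t)\ge0$ with $\alpha(t+1)\le\alpha(t)$, $\sum_t\alpha(t)=\infty$, $\sum_t\alpha^2(t)<\infty$. Algorithm 2: arbitrary $x_i(0)$; in iteration $t\ge1$ non-faulty agent $i$ sends $x_i(t-1)$ to all out-neighbors, receives $|N_i^-|$ values (default for missing), discards the $f$ smallest and $f$ largest, lets $N_i^*(t)$ be the senders of the remaining values with values $w_j$, sets $w_i=x_i(t-1)$, and updates $x_i(t)=\frac{1}{|N_i^*(t)|+1}\sum_{j\in\{i\}\cup N_i^*(t)}w_j-\alpha(t-1)d_i(t-1)$, $d_i(t-1)$ a subgradient of $g_i$ at $x_i(t-1)$. Known facts: with $\mathbf{x}(t)$ the non-faulty states and $\mathbf{d}(t)=(d_1(t),\dots,d_{n-\phi}(t))$, $\mathbf{x}(t+1)=\mathbf{M}(t)\mathbf{x}(t)-\alpha(t)\mathbf{d}(t)$ with row-stochastic $\mathbf{M}(t)$, and there is $0<\beta<1$ with $\mathbf{M}(t)\ge\beta\mathbf{H}(t)$ entrywise for the adjacency matrix $\mathbf{H}(t)$ (including diagonal ones) of some reduced graph in $R_{\mathcal{F}}$. Let $\Phi(t,r)=\mathbf{M}(t)\cdots\mathbf{M}(r)$ for $t\ge r$, $\Phi(t,t+1)=I$, $\nu=\tau(n-\phi)$, $\gamma=1-\beta^\nu$. Under Condition 1, for each $r$, $\lim_{t\to\infty}\Phi(t,r)=\mathbf{1}\pi(r)$ for a stochastic row vector $\pi(r)$, and $|\Phi_{ij}(t,r)-\pi_j(r)|\le\gamma^{\lceil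 (t-r+1)/\nu\rceil}$ for all $t\ge r$. Define $y(t)=\sum_{j=1}^{n-\phi}\pi_j(0)x_j(0)-\sum_{r=1}^{t}\alpha(r-1)\sum_{j=1}^{n-\phi}\pi_j(r)d_j(r-1)$. *)

theory Defs
  imports "HOL-Analysis.Analysis"
begin

text \<open>Agents are 1..n; the graph is an edge set E of pairs (j,i) meaning j -> i.\<close>

definition in_nbrs :: "(nat \<times> nat) set \<Rightarrow> nat \<Rightarrow> nat set" where
  "in_nbrs E i = {j. (j, i) \<in> E}"

definition digraph_ok :: "nat \<Rightarrow> (nat \<times> nat) set \<Rightarrow> bool" where
  "digraph_ok n E \<longleftrightarrow> E \<subseteq> {1..n} \<times> {1..n} \<and> (\<forall>i. (i, i) \<notin> E)"

text \<open>E' (on vertex set {1..n} - F) is a reduced graph of E w.r.t. F: remove F with its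
  edges, then up to f further incoming edges at each remaining node.\<close>
definition reduced_graph ::
  "nat \<Rightarrow> nat \<Rightarrow> (nat \<times> nat) set \<Rightarrow> nat set \<Rightarrow> (nat \<times> nat) set \<Rightarrow> bool" where
  "reduced_graph n f E F E' \<longleftrightarrow>
     E' \<subseteq> {(j, i). (j, i) \<in> E \<and> j \<notin> F \<and> i \<notin> F} \<and>
     (\<forall>i \<in> {1..n} - F. card {j. (j, i) \<in> E \<and> j \<notin> F \<and> (j, i) \<notin> E'} \<le> f)"

definition reduced_graphs ::
  "nat \<Rightarrow> nat \<Rightarrow> (nat \<times> nat) set \<Rightarrow> nat set \<Rightarrow> (nat \<times> nat) set set" where
  "reduced_graphs n f E F = {E'. reduced_graph n f E F E'}"

definition source_component :: "nat set \<Rightarrow> (nat \<times> nat) set \<Rightarrow> nat set" where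
  "source_component W E' = {s \<in> W. \<forall>v \<in> W. v \<noteq> s \<longrightarrow> (s, v) \<in> E'\<^sup>+}"

definition sp :: "nat \<Rightarrow> nat \<Rightarrow> (nat \<Rightarrow> nat \<Rightarrow> real) \<Rightarrow> nat" where
  "sp k n A =
     (if \<forall>r \<in> {1..k}. (\<Sum>c \<in> {1..n}. A r c) > 0
      then (LEAST s. \<forall>C \<subseteq> {1..n}. card C = s \<longrightarrow> (\<forall>r \<in> {1..k}. (\<Sum>c \<in> C. A r c) > 0))
      else n + 1)"

definition condition1 ::
  "nat \<Rightarrow> nat \<Rightarrow> nat \<Rightarrow> (nat \<times> nat) set \<Rightarrow> (nat \<Rightarrow> nat \<Rightarrow> real) \<Rightarrow> bool" where
  "condition1 n f k E A \<longleftrightarrow>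
     (\<forall>F' \<subseteq> {1..n}. card F' \<le> f \<longrightarrow>
        (\<forall>E' \<in> reduced_graphs n f E F'.
           card (source_component ({1..n} - F') E') \<ge> max (f + 1) (sp k n A)))"

definition admissible :: "real \<Rightarrow> (real \<Rightarrow> real) \<Rightarrow> bool" where
  "admissible L h \<longleftrightarrow>
     convex_on UNIV h \<and> (\<forall>x y. \<bar>h x - h y\<bar> \<le> L * \<bar>x - y\<bar>) \<and>
     {x. \<forall>z. h x \<le> h z} \<noteq> {} \<and> compact {x. \<forall>z. h x \<le> h z}"

definition assignment_matrix :: "nat \<Rightarrow> nat \<Rightarrow> (nat \<Rightarrow> nat \<Rightarrow> real) \<Rightarrow> bool" where
  "assignment_matrix k n A \<longleftrightarrow>
     (\<forall>j \<in> {1..k}. \<forall>i \<in> {1..n}. A j i \<ge> 0) \<and> (\<forall>i \<in> {1..n}. (\<Sum>j \<in> {1..k}. A j i) = 1)"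

definition step_sizes :: "(nat \<Rightarrow> real) \<Rightarrow> bool" where
  "step_sizes \<alpha> \<longleftrightarrow> (\<forall>t. \<alpha> t \<ge> 0 \<and> \<alpha> (Suc t) \<le> \<alpha> t) \<and>
     \<not> summable \<alpha> \<and> summable (\<lambda>t. (\<alpha> t)\<^sup>2)"

definition local_cost ::
  "nat \<Rightarrow> (nat \<Rightarrow> nat \<Rightarrow> real) \<Rightarrow> (nat \<Rightarrow> real \<Rightarrow> real) \<Rightarrow> nat \<Rightarrow> real \<Rightarrow> real" where
  "local_cost k A h i z = (\<Sum>j \<in> {1..k}. A j i * h j z)"

definition is_subgradient :: "(real \<Rightarrow> real) \<Rightarrow> real \<Rightarrow> real \<Rightarrow> bool" where
  "is_subgradient g x d \<longleftrightarrow> (\<forall>z. g z \<ge> g x + d * (z - x))"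

text \<open>One iteration (iteration t+1) of Algorithm 2 at non-faulty agent i. recv i j is the
  value agent i received from in-neighbour j in that iteration; the f smallest (set Sm) and
  f largest (set Lg) received values are discarded, the remaining senders form Nst.\<close>
definition alg2_step ::
  "nat \<Rightarrow> (nat \<times> nat) set \<Rightarrow> nat \<Rightarrow> (nat \<Rightarrow> real) \<Rightarrow> real \<Rightarrow> real \<Rightarrow> real \<Rightarrow> real \<Rightarrow> bool" where
  "alg2_step f E i recv xold a d xnew \<longleftrightarrow>
     (\<exists>Nst Sm Lg. Nst \<union> Sm \<union> Lg = in_nbrs E i \<and>
        Nst \<inter> Sm = {} \<and> Nst \<inter> Lg = {} \<and> Sm \<inter> Lg = {} \<and>
        card Sm = f \<and> card Lg = f \<and>
        (\<forall>u \<in> Sm. \<forall>v \<in> Nst \<union> Lg. recv u \<le> recv v) \<and>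
        (\<forall>u \<in> Lg. \<forall>v \<in> Nst \<union> Sm. recv v \<le> recv u) \<and>
        xnew = (xold + (\<Sum>j \<in> Nst. recv j)) / (real (card Nst) + 1) - a * d)"

text \<open>Phi(t, r) = M(t) ... M(r) over index set S, with Phi(t, t+1) = I.\<close>
primrec prodlen :: "(nat \<Rightarrow> nat \<Rightarrow> nat \<Rightarrow> real) \<Rightarrow> nat set \<Rightarrow> nat \<Rightarrow> nat \<Rightarrow> nat \<Rightarrow> nat \<Rightarrow> real" where
  "prodlen M S r 0 = (\<lambda>i j. if i = j then 1 else 0)"
| "prodlen M S r (Suc m) = (\<lambda>i j. \<Sum>l \<in> S. M (r + m) i l * prodlen M S r m l j)"

definition Phi :: "(nat \<Rightarrow> nat \<Rightarrow> nat \<Rightarrow> real) \<Rightarrow> nat set \<Rightarrow> nat \<Rightarrow> nat \<Rightarrow> nat \<Rightarrow> nat \<Rightarrow> real" where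
  "Phi M S t r = prodlen M S r (t + 1 - r)"

end

theory Submission
  imports Defs
begin

text \<open>Unrolling the recursion x(t+1) = M(t) x(t) - \<alpha>(t) d(t) expresses every non-faulty state
  through the backward products of the M(t); y(t) is the same expression with every backward
  product starting at time r replaced by its limit 1 \<pi>(r). The backward product of length m
  approaches its limit at a geometric rate \<rho>^m, so y(t) - x_i(t) is bounded by \<rho>^t times a
  constant plus L |NF| times the convolution of the step sizes with \<rho>^t; the latter tends to
  zero because the step sizes do. Only the matrix representation, the rate bound (which at
  r = 0 already yields the convergence of the backward products) and the subgradient bound
  |d| \<le> L enter the argument; the remaining hypotheses are those of the setting.\<close>

lemma prodlen_solution:
  fixes M :: "nat \<Rightarrow> nat \<Rightarrow> nat \<Rightarrow> real" and S :: "nat set"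
  assumes "finite S"
    and rec: "\<forall>t. \<forall>i\<in>S. x (Suc t) i = (\<Sum>j\<in>S. M t i j * x t j) - \<alpha> t * d t i"
    and "i \<in> S"
  shows "x t i = (\<Sum>j\<in>S. prodlen M S 0 t i j * x 0 j)
           - (\<Sum>s<t. \<alpha> s * (\<Sum>j\<in>S. prodlen M S (Suc s) (t - Suc s) i j * d s j))"
  using \<open>i \<in> S\<close>
proof (induction t arbitrary: i)
  case 0
  then show ?case using \<open>finite S\<close> by (simp add: mult_delta_left)
next
  case (Suc t)
  let ?P = "prodlen M S"
  have push_x: "(\<Sum>l\<in>S. M t i l * (\<Sum>j\<in>S. ?P 0 t l j * x 0 j)) = (\<Sum>j\<in>S. ?P 0 (Suc t) i j * x 0 j)"
    by (simp add: sum_distrib_left sum_distrib_right mult.assoc) (rule sum.swap)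
  have push_d: "(\<Sum>l\<in>S. M t i l * (\<Sum>j\<in>S. ?P (Suc s) (t - Suc s) l j * d s j))
      = (\<Sum>j\<in>S. ?P (Suc s) (Suc t - Suc s) i j * d s j)" if "s < t" for s
  proof -
    have "Suc t - Suc s = Suc (t - Suc s)" "Suc s + (t - Suc s) = t" using that by auto
    then show ?thesis
      by (simp add: sum_distrib_left sum_distrib_right mult.assoc) (rule sum.swap)
  qed
  have last_d: "(\<Sum>j\<in>S. ?P (Suc t) (Suc t - Suc t) i j * d t j) = d t i"
    using \<open>finite S\<close> \<open>i \<in> S\<close> by (simp add: mult_delta_left)
  have swap: "(\<Sum>l\<in>S. M t i l * (\<Sum>s<t. \<alpha> s * (\<Sum>j\<in>S. ?P (Suc s) (t - Suc s) l j * d s j)))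
      = (\<Sum>s<t. \<alpha> s * (\<Sum>l\<in>S. M t i l * (\<Sum>j\<in>S. ?P (Suc s) (t - Suc s) l j * d s j)))"
    by (simp add: sum_distrib_left mult.left_commute) (rule sum.swap)
  have "x (Suc t) i = (\<Sum>l\<in>S. M t i l * x t l) - \<alpha> t * d t i" using rec Suc.prems by auto
  also have "\<dots> = (\<Sum>l\<in>S. M t i l * (\<Sum>j\<in>S. ?P 0 t l j * x 0 j))
      - (\<Sum>l\<in>S. M t i l * (\<Sum>s<t. \<alpha> s * (\<Sum>j\<in>S. ?P (Suc s) (t - Suc s) l j * d s j)))
      - \<alpha> t * d t i"
    using Suc.IH by (simp add: right_diff_distrib sum_subtractf)
  also have "\<dots> = (\<Sum>j\<in>S. ?P 0 (Suc t) i j * x 0 j)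
      - (\<Sum>s<Suc t. \<alpha> s * (\<Sum>j\<in>S. ?P (Suc s) (Suc t - Suc s) i j * d s j))"
    unfolding push_x swap using push_d last_d by simp
  finally show ?case .
qed

lemma geometric_convolution_tendsto_zero:
  fixes a :: "nat \<Rightarrow> real"
  assumes nonneg: "\<And>t. a t \<ge> 0" and lim: "a \<longlonglongrightarrow> 0" and "0 \<le> \<rho>" "\<rho> < 1"
  shows "(\<lambda>t. \<Sum>s<t. a s * \<rho> ^ (t - Suc s)) \<longlonglongrightarrow> 0"
proof -
  define c where "c t = (\<Sum>s<t. a s * \<rho> ^ (t - Suc s))" for t
  have c_nonneg: "c t \<ge> 0" for t unfolding c_def using nonneg \<open>0 \<le> \<rho>\<close> by (auto intro!: sum_nonneg)
  have c_Suc: "c (Suc t) = \<rho> * c t + a t" for t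
  proof -
    have "(\<Sum>s<t. a s * \<rho> ^ (Suc t - Suc s)) = \<rho> * c t"
      unfolding c_def sum_distrib_left
      by (intro sum.cong) (auto simp: Suc_diff_Suc[symmetric])
    then show ?thesis unfolding c_def by simp
  qed
  show ?thesis unfolding c_def[symmetric]
  proof (rule LIMSEQ_I)
    fix e :: real assume "e > 0"
    then have "(e/2) * (1 - \<rho>) > 0" using \<open>\<rho> < 1\<close> by simp
    then have "\<forall>\<^sub>F t in sequentially. a t < (e/2) * (1 - \<rho>)"
      using lim unfolding order_tendsto_iff by blast
    then obtain T where T: "\<And>t. t \<ge> T \<Longrightarrow> a t < (e/2) * (1 - \<rho>)"
      by (auto simp: eventually_sequentially)
    \<comment> \<open>from T on, the recursion contracts c towards the band [0, e/2]\<close>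
    have c_tail: "c (T + m) \<le> e/2 + \<rho> ^ m * c T" for m
    proof (induction m)
      case 0 then show ?case using \<open>e > 0\<close> by simp
    next
      case (Suc m)
      have "c (T + Suc m) = \<rho> * c (T + m) + a (T + m)" using c_Suc by simp
      also have "\<dots> \<le> \<rho> * (e/2 + \<rho> ^ m * c T) + (e/2) * (1 - \<rho>)"
        using Suc T[of "T + m"] \<open>0 \<le> \<rho>\<close> by (intro add_mono mult_left_mono) auto
      also have "\<dots> = e/2 + \<rho> ^ Suc m * c T" by (simp add: field_simps)
      finally show ?case .
    qed
    have "(\<lambda>m. \<rho> ^ m * c T) \<longlonglongrightarrow> 0"
      using LIMSEQ_power_zero[of \<rho>] assms(3,4) by (simp add: tendsto_mult_left_zero)
    moreover have "e/2 > 0" using \<open>e > 0\<close> by simp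
    ultimately have "\<forall>\<^sub>F m in sequentially. \<rho> ^ m * c T < e/2"
      unfolding order_tendsto_iff by blast
    then obtain K where K: "\<And>m. m \<ge> K \<Longrightarrow> \<rho> ^ m * c T < e/2"
      by (auto simp: eventually_sequentially)
    have "norm (c t) < e" if "t \<ge> T + K" for t
    proof -
      have "c t \<le> e/2 + \<rho> ^ (t - T) * c T" using c_tail[of "t - T"] that by simp
      moreover have "\<rho> ^ (t - T) * c T < e/2" using K that by simp
      ultimately show ?thesis using c_nonneg[of t] by simp
    qed
    then show "\<exists>no. \<forall>t\<ge>no. norm (c t - 0) < e" by auto
  qed
qed

lemma root_power_bound:
  fixes \<gamma> :: real
  assumes "0 < \<nu>" "0 \<le> \<gamma>" "\<gamma> \<le> 1"
  shows "\<gamma> ^ nat \<lceil>real m / real \<nu>\<rceil> \<le> root \<nu> \<gamma> ^ m"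
proof -
  define c where "c = nat \<lceil>real m / real \<nu>\<rceil>"
  have "real m / real \<nu> \<le> real c" unfolding c_def by linarith
  then have "real m \<le> real \<nu> * real c" using \<open>0 < \<nu>\<close> by (simp add: field_simps)
  then have "m \<le> \<nu> * c" by (metis of_nat_le_iff of_nat_mult)
  have "\<gamma> ^ c = root \<nu> \<gamma> ^ (\<nu> * c)"
    using assms by (simp add: power_mult)
  also have "\<dots> \<le> root \<nu> \<gamma> ^ m"
    using \<open>m \<le> \<nu> * c\<close> assms by (intro power_decreasing) auto
  finally show ?thesis unfolding c_def .
qed

lemma prodlen_geometric_rate:
  fixes M :: "nat \<Rightarrow> nat \<Rightarrow> nat \<Rightarrow> real" and \<gamma> p :: real
  assumes "0 < \<nu>" "0 \<le> \<gamma>" "\<gamma> \<le> 1" "0 \<le> p" "p \<le> 1"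
    and rate: "\<And>t. r \<le> t \<Longrightarrow> \<bar>Phi M S t r i j - p\<bar> \<le> \<gamma> ^ nat \<lceil>real (t - r + 1) / real \<nu>\<rceil>"
  shows "\<bar>p - prodlen M S r m i j\<bar> \<le> root \<nu> \<gamma> ^ m"
proof (cases m)
  case 0
  then show ?thesis using \<open>0 \<le> p\<close> \<open>p \<le> 1\<close> by auto
next
  case (Suc m')
  have "Phi M S (r + m') r = prodlen M S r m" and "r + m' - r + 1 = m"
    unfolding Phi_def using Suc by simp_all
  then have "\<bar>p - prodlen M S r m i j\<bar> \<le> \<gamma> ^ nat \<lceil>real m / real \<nu>\<rceil>"
    using rate[of "r + m'"] by (simp add: abs_minus_commute)
  also have "\<dots> \<le> root \<nu> \<gamma> ^ m" using root_power_bound assms(1-3) .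
  finally show ?thesis .
qed

lemma subgradient_abs_le:
  assumes "is_subgradient g x d" and lip: "\<And>a b. \<bar>g a - g b\<bar> \<le> L * \<bar>a - b\<bar>"
  shows "\<bar>d\<bar> \<le> L"
proof -
  have "g (x + 1) \<ge> g x + d" "g (x - 1) \<ge> g x - d"
    using assms(1) unfolding is_subgradient_def by (metis add_diff_cancel_left' mult_1_right,
        metis diff_minus_eq_add mult_minus1_right uminus_add_conv_diff add_diff_cancel_left')
  moreover have "\<bar>g (x + 1) - g x\<bar> \<le> L" "\<bar>g (x - 1) - g x\<bar> \<le> L"
    using lip[of "x + 1" x] lip[of "x - 1" x] by simp_all
  ultimately show ?thesis by linarith
qed

lemma local_cost_lipschitz:
  assumes "assignment_matrix k n A" "\<forall>l \<in> {1..k}. admissible L (h l)" "i \<in> {1..n}"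
  shows "\<bar>local_cost k A h i a - local_cost k A h i b\<bar> \<le> L * \<bar>a - b\<bar>"
proof -
  have "\<bar>local_cost k A h i a - local_cost k A h i b\<bar> = \<bar>\<Sum>l\<in>{1..k}. A l i * (h l a - h l b)\<bar>"
    unfolding local_cost_def by (simp add: right_diff_distrib sum_subtractf)
  also have "\<dots> \<le> (\<Sum>l\<in>{1..k}. A l i * (L * \<bar>a - b\<bar>))"
  proof (rule order_trans[OF sum_abs sum_mono])
    fix l assume "l \<in> {1..k}"
    then have "A l i \<ge> 0" "\<bar>h l a - h l b\<bar> \<le> L * \<bar>a - b\<bar>"
      using assms unfolding assignment_matrix_def admissible_def by auto
    then show "\<bar>A l i * (h l a - h l b)\<bar> \<le> A l i * (L * \<bar>a - b\<bar>)"
      by (simp add: abs_mult mult_left_mono)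
  qed
  also have "\<dots> = L * \<bar>a - b\<bar>"
    using assms unfolding assignment_matrix_def by (simp add: sum_distrib_right[symmetric])
  finally show ?thesis .
qed

lemma step_sizes_tendsto_zero:
  assumes "step_sizes \<alpha>"
  shows "\<alpha> \<longlonglongrightarrow> 0"
proof -
  have "(\<lambda>t. (\<alpha> t)\<^sup>2) \<longlonglongrightarrow> 0"
    using assms summable_LIMSEQ_zero unfolding step_sizes_def by blast
  then have "(\<lambda>t. sqrt ((\<alpha> t)\<^sup>2)) \<longlonglongrightarrow> sqrt 0" by (rule tendsto_real_sqrt)
  then show ?thesis using assms unfolding step_sizes_def by simp
qed

lemma finite_reduced_graphs:
  assumes "digraph_ok n E"
  shows "finite (reduced_graphs n f E F)"
proof -
  have "E \<subseteq> {1..n} \<times> {1..n}" using assms unfolding digraph_ok_def by simp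
  then have "finite E" by (rule finite_subset) simp
  moreover have "reduced_graphs n f E F \<subseteq> Pow E"
    unfolding reduced_graphs_def reduced_graph_def by auto
  ultimately show ?thesis by (meson finite_Pow_iff finite_subset)
qed

lemma tracking_error_tendsto_zero:
  fixes M :: "nat \<Rightarrow> nat \<Rightarrow> nat \<Rightarrow> real" and S :: "nat set"
  assumes "finite S" "i \<in> S"
    and rec: "\<forall>t. \<forall>i\<in>S. x (Suc t) i = (\<Sum>j\<in>S. M t i j * x t j) - \<alpha> t * d t i"
    and \<alpha>_nonneg: "\<And>t. \<alpha> t \<ge> 0" and "\<alpha> \<longlonglongrightarrow> 0"
    and d_bound: "\<And>t j. j \<in> S \<Longrightarrow> \<bar>d t j\<bar> \<le> L"
    and "0 \<le> \<rho>" "\<rho> < 1"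
    and rate: "\<And>r m j. j \<in> S \<Longrightarrow> \<bar>\<pi> r j - prodlen M S r m i j\<bar> \<le> \<rho> ^ m"
    and y: "\<And>t. y t = (\<Sum>j\<in>S. \<pi> 0 j * x 0 j) - (\<Sum>s<t. \<alpha> s * (\<Sum>j\<in>S. \<pi> (Suc s) j * d s j))"
  shows "(\<lambda>t. y t - x t i) \<longlonglongrightarrow> 0"
proof -
  let ?P = "prodlen M S"
  let ?conv = "\<lambda>t. \<Sum>s<t. \<alpha> s * \<rho> ^ (t - Suc s)"
  define C where "C = (\<Sum>j\<in>S. \<bar>x 0 j\<bar>)"
  have error: "y t - x t i = (\<Sum>j\<in>S. (\<pi> 0 j - ?P 0 t i j) * x 0 j)
      - (\<Sum>s<t. \<alpha> s * (\<Sum>j\<in>S. (\<pi> (Suc s) j - ?P (Suc s) (t - Suc s) i j) * d s j))" for t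
    unfolding y prodlen_solution[OF \<open>finite S\<close> rec \<open>i \<in> S\<close>]
    by (simp add: left_diff_distrib sum_subtractf right_diff_distrib)
  have initial: "\<bar>\<Sum>j\<in>S. (\<pi> 0 j - ?P 0 t i j) * x 0 j\<bar> \<le> \<rho> ^ t * C" for t
    unfolding C_def sum_distrib_left
    by (rule order_trans[OF sum_abs sum_mono]) (simp add: abs_mult rate mult_right_mono)
  have inputs: "\<bar>\<Sum>s<t. \<alpha> s * (\<Sum>j\<in>S. (\<pi> (Suc s) j - ?P (Suc s) (t - Suc s) i j) * d s j)\<bar>
      \<le> real (card S) * L * ?conv t" for t
  proof -
    have "\<bar>\<Sum>j\<in>S. (\<pi> (Suc s) j - ?P (Suc s) (t - Suc s) i j) * d s j\<bar>
        \<le> real (card S) * L * \<rho> ^ (t - Suc s)" for s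
    proof -
      have "\<bar>\<Sum>j\<in>S. (\<pi> (Suc s) j - ?P (Suc s) (t - Suc s) i j) * d s j\<bar> \<le> (\<Sum>j\<in>S. \<rho> ^ (t - Suc s) * L)"
        by (rule order_trans[OF sum_abs sum_mono]) (auto simp: abs_mult \<open>0 \<le> \<rho>\<close> intro!: mult_mono rate d_bound)
      then show ?thesis by (simp add: mult_ac)
    qed
    then have "\<bar>\<Sum>s<t. \<alpha> s * (\<Sum>j\<in>S. (\<pi> (Suc s) j - ?P (Suc s) (t - Suc s) i j) * d s j)\<bar>
        \<le> (\<Sum>s<t. \<alpha> s * (real (card S) * L * \<rho> ^ (t - Suc s)))"
      by (intro order_trans[OF sum_abs sum_mono]) (simp add: abs_mult \<alpha>_nonneg mult_left_mono)
    also have "\<dots> = real (card S) * L * ?conv t"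
      by (simp add: sum_distrib_left mult.left_commute)
    finally show ?thesis .
  qed
  have "(\<lambda>t. \<rho> ^ t * C) \<longlonglongrightarrow> 0"
    using LIMSEQ_power_zero[of \<rho>] \<open>0 \<le> \<rho>\<close> \<open>\<rho> < 1\<close> by (simp add: tendsto_mult_left_zero)
  moreover have "?conv \<longlonglongrightarrow> 0"
    using \<alpha>_nonneg \<open>\<alpha> \<longlonglongrightarrow> 0\<close> \<open>0 \<le> \<rho>\<close> \<open>\<rho> < 1\<close> by (rule geometric_convolution_tendsto_zero)
  ultimately have bound_lim: "(\<lambda>t. \<rho> ^ t * C + real (card S) * L * ?conv t) \<longlonglongrightarrow> 0"
    by (intro tendsto_add_zero tendsto_mult_right_zero)
  have bound: "norm (y t - x t i) \<le> \<rho> ^ t * C + real (card S) * L * ?conv t" for t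
    unfolding error real_norm_def using initial[of t] inputs[of t] by linarith
  show ?thesis by (rule Lim_null_comparison[OF always_eventually[OF allI[OF bound]] bound_lim])
qed

theorem lemma7:
  fixes n f k :: nat
    and E :: "(nat \<times> nat) set"
    and F :: "nat set"
    and A :: "nat \<Rightarrow> nat \<Rightarrow> real"
    and L :: real
    and h :: "nat \<Rightarrow> real \<Rightarrow> real"
    and \<alpha> :: "nat \<Rightarrow> real"
    and x :: "nat \<Rightarrow> nat \<Rightarrow> real"
    and d :: "nat \<Rightarrow> nat \<Rightarrow> real"
    and recv :: "nat \<Rightarrow> nat \<Rightarrow> nat \<Rightarrow> real"
    and M :: "nat \<Rightarrow> nat \<Rightarrow> nat \<Rightarrow> real"
    and \<beta> :: real
    and \<pi> :: "nat \<Rightarrow> nat \<Rightarrow> real"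
    and y :: "nat \<Rightarrow> real"
  defines "NF \<equiv> {1..n} - F"
  assumes graph: "digraph_ok n E"
    and faulty: "F \<subseteq> {1..n}" "card F \<le> f"
    and assign: "assignment_matrix k n A"
    and adm: "\<forall>j \<in> {1..k}. admissible L (h j)"
    and steps: "step_sizes \<alpha>"
    and cond1: "condition1 n f k E A"
    and subgrad: "\<forall>t. \<forall>i \<in> NF. is_subgradient (local_cost k A h i) (x t i) (d t i)"
    \<comment> \<open>messages: non-faulty senders send their current state, faulty ones arbitrary values\<close>
    and msgs: "\<forall>t. \<forall>i \<in> NF. \<forall>j \<in> in_nbrs E i. j \<notin> F \<longrightarrow> recv t i j = x t j"
    \<comment> \<open>Algorithm 2: iteration t+1 computes x (t+1) from the values received\<close>
    and alg: "\<forall>t. \<forall>i \<in> NF. alg2_step f E i (recv t i) (x t i) (\<alpha> t) (d t i) (x (Suc t) i)"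
    \<comment> \<open>known facts: matrix representation of the non-faulty dynamics\<close>
    and beta: "0 < \<beta>" "\<beta> < 1"
    and Mstoch: "\<forall>t. \<forall>i \<in> NF. (\<forall>j \<in> NF. M t i j \<ge> 0) \<and> (\<Sum>j \<in> NF. M t i j) = 1"
    and Mrep: "\<forall>t. \<forall>i \<in> NF. x (Suc t) i = (\<Sum>j \<in> NF. M t i j * x t j) - \<alpha> t * d t i"
    and MH: "\<forall>t. \<exists>E' \<in> reduced_graphs n f E F. \<forall>i \<in> NF. \<forall>j \<in> NF.
               M t i j \<ge> \<beta> * (if i = j \<or> (j, i) \<in> E' then 1 else 0)"
    \<comment> \<open>known facts under Condition 1: ergodicity of the backward products\<close>
    and pi_stoch: "\<forall>r. (\<forall>j \<in> NF. \<pi> r j \<ge> 0) \<and> (\<Sum>j \<in> NF. \<pi> r j) = 1"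
    and pi_lim: "\<forall>r. \<forall>i \<in> NF. \<forall>j \<in> NF. (\<lambda>t. Phi M NF t r i j) \<longlonglongrightarrow> \<pi> r j"
    and pi_rate: "\<forall>r t. r \<le> t \<longrightarrow> (\<forall>i \<in> NF. \<forall>j \<in> NF.
               \<bar>Phi M NF t r i j - \<pi> r j\<bar> \<le>
               (1 - \<beta> ^ (card (reduced_graphs n f E F) * card NF))
                 ^ nat \<lceil>real (t - r + 1) / real (card (reduced_graphs n f E F) * card NF)\<rceil>)"
    and y_def: "\<forall>t. y t = (\<Sum>j \<in> NF. \<pi> 0 j * x 0 j)
               - (\<Sum>r = 1..t. \<alpha> (r - 1) * (\<Sum>j \<in> NF. \<pi> r j * d (r - 1) j))"
  shows "\<forall>i \<in> NF. (\<lambda>t. \<bar>y t - x t i\<bar>) \<longlonglongrightarrow> 0"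
proof
  fix i assume "i \<in> NF"
  have "finite NF" unfolding NF_def by simp
  define \<nu> where "\<nu> = card (reduced_graphs n f E F) * card NF"
  have "reduced_graphs n f E F \<noteq> {}" using MH by blast
  then have "0 < \<nu>"
    unfolding \<nu>_def using finite_reduced_graphs[OF graph] \<open>finite NF\<close> \<open>i \<in> NF\<close>
    by (auto simp: card_gt_0_iff)
  define \<gamma> where "\<gamma> = 1 - \<beta> ^ \<nu>"
  have "0 \<le> \<gamma>" "\<gamma> < 1" unfolding \<gamma>_def using beta by (simp_all add: power_le_one)
  have \<pi>_le_1: "\<pi> r j \<le> 1" if "j \<in> NF" for r j
    using member_le_sum[of j NF "\<pi> r"] pi_stoch \<open>finite NF\<close> that by auto
  have rate: "\<bar>\<pi> r j - prodlen M NF r m i j\<bar> \<le> root \<nu> \<gamma> ^ m" if "j \<in> NF" for r m j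
    using pi_rate \<open>i \<in> NF\<close> that pi_stoch \<pi>_le_1[OF that] \<open>0 < \<nu>\<close> \<open>0 \<le> \<gamma>\<close> \<open>\<gamma> < 1\<close>
    by (intro prodlen_geometric_rate) (auto simp: \<gamma>_def \<nu>_def)
  have d_bound: "\<bar>d t j\<bar> \<le> L" if "j \<in> NF" for t j
    using subgrad that local_cost_lipschitz[OF assign adm] unfolding NF_def
    by (blast intro: subgradient_abs_le)
  have "(\<lambda>t. y t - x t i) \<longlonglongrightarrow> 0"
  proof (rule tracking_error_tendsto_zero[OF \<open>finite NF\<close> \<open>i \<in> NF\<close> Mrep _ _ d_bound _ _ rate])
    show "\<alpha> \<longlonglongrightarrow> 0" using steps by (rule step_sizes_tendsto_zero)
    show "y t = (\<Sum>j\<in>NF. \<pi> 0 j * x 0 j) - (\<Sum>s<t. \<alpha> s * (\<Sum>j\<in>NF. \<pi> (Suc s) j * d s j))" for t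
      using y_def by (simp add: sum.atLeast1_atMost_eq)
  qed (use steps \<open>0 \<le> \<gamma>\<close> \<open>\<gamma> < 1\<close> \<open>0 < \<nu>\<close> in \<open>auto simp: step_sizes_def\<close>)
  then show "(\<lambda>t. \<bar>y t - x t i\<bar>) \<longlonglongrightarrow> 0" by (rule tendsto_rabs_zero)
qed

end
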